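(* Let $\bm{U}_{RU},\bm{U}_{LU},\bm{U}_{LD},\bm{U}_{RD}\in\mathcal{G}$ and define the wave speeds $S_L=2\min_{\bm{W}}\lambda_1^{(1)}(\bm{W})$, $S_R=2\max_{\bm{W}}\lambda_1^{(4)}(\bm{W})$, $S_D=2\min_{\bm{W}}\lambda_2^{(1)}(\bm{W})$, $S_U=2\max_{\bm{W}}\lambda_2^{(4)}(\bm{W})$, where $\bm{W}$ ranges over $\{\bm{U}_{LD},\bm{U}_{RD},\bm{U}_{LU},\bm{U}_{RU}\}$. Assume $S_L<0<S_R$ and $S_D<0<S_U$. Let $$\bm{U}^{\ast}=\frac{S_RS_U\bm{U}_{RU}+S_LS_D\bm{U}_{LD}-S_RS_D\bm{U}_{RD}-S_LS_U\bm{U}_{LU}}{(S_R-S_L)(S_U-S_D)}-\frac{S_U(\bm{F}_{RU}-\bm{F}_{LU})-S_D(\bm{F}_{RD}-\bm{F}_{LD})}{(S_R-S_L)(S_U-S_D)}-\frac{S_R(\bm{G}_{RU}-\bm{G}_{RD})-S_L(\bm{G}_{LU}-\bm{G}_{LD})}{(S_R-S_L)(S_U-S_D)},$$ where $\bm{F}_{K}=\bm{F}_1(\bm{U}_K)$ and $\bm{G}_K=\bm{F}_2(\bm{U}_K)$ for $K\in\{LD,RD,LU,RU\}$. Then $\bm{U}^\ast=(D^\ast,\bm{m}^\ast,E^\ast)^T\in\mathcal{G}$, i.e. $D^\ast>0$, $E^\ast>0$ and $(E^\ast)^2-(D^\ast)^2-|\bm{m}^\ast|^2>0$.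
   Context: Two-dimensional special relativistic hydrodynamics in units with $c=1$. Primitive variables: rest-mass density $\rho$, velocity $\bm{u}=(u_1,u_2)$, pressure $p$; equation of state $p=(\Gamma-1)\rho e$ with fixed $\Gamma\in(1,2]$; $h=1+e+p/\rho$; $\gamma=(1-|\bm{u}|^2)^{-1/2}$. Conservative variables $\bm{U}=(D,\bm{m},E)^T$ with $D=\rho\gamma$, $\bm{m}=\rho h\gamma^2\bm{u}$, $E=\rho h\gamma^2-p$. Fluxes $\bm{F}_\ell(\bm{U})=(Du_\ell,\ \bm{m}u_\ell+p\bm{e}_\ell,\ (E+p)u_\ell)^T$, $\ell=1,2$ ($\bm{e}_\ell$ the $\ell$-th unit vector of $\mathbb{R}^2$). Admissible set $\mathcal{G}=\{\bm{U}: D>0,\ E-\sqrt{D^2+|\bm{m}|^2}>0\}$ (equivalently $\rho>0,p>0,|\bm{u}|<1$; on $\mathcal{G}$ primitive variables and fluxes are well defined). With $c_s=\sqrt{\Gamma p/(\rho h)}$, $\lambda_\ell^{(1)}(\bm{U})$ and $\lambda_\ell^{(4)}(\bm{U})$ denote $\dfrac{u_\ell(1-c_s^2)\mp c_s\gamma^{-1}\sqrt{1-u_\ell^2-c_s^2(|\bm{u}|^2-u_\ell^2)}}{1-c_s^2|\bm{u}|^2}$ (minus sign for $(1)$, plus sign for $(4)$), the smallest and largest eigenvalues of $\partial\bm{F}_\ell/\partial\bm{U}$. The four states are the initial data of a 2D Riemann problem in the four quadrants (RU: first, LU: second, LD: third, RD: fourth), and $\bm{U}^\ast$ is the intermediate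 state of the multidimensional HLL Riemann solver. *)

theory Defs
  imports "HOL-Analysis.Analysis"
begin

text \<open>Primitive state (rho, u1, u2, p), adiabatic index gam of 2D special relativistic hydrodynamics (c = 1),
  ideal-gas EOS p = (gam - 1) rho e.\<close>
type_synonym prim = "real \<times> real \<times> real \<times> real"

definition prim_admissible :: "prim \<Rightarrow> bool" where
  "prim_admissible w = (case w of (rho, u1, u2, p) \<Rightarrow> rho > 0 \<and> p > 0 \<and> u1\<^sup>2 + u2\<^sup>2 < 1)"

definition lorentz :: "real \<Rightarrow> real \<Rightarrow> real" where
  "lorentz u1 u2 = 1 / sqrt (1 - (u1\<^sup>2 + u2\<^sup>2))"

definition internal_energy :: "real \<Rightarrow> real \<Rightarrow> real \<Rightarrow> real" where
  "internal_energy gam rho p = p / ((gam - 1) * rho)"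

definition enthalpy :: "real \<Rightarrow> real \<Rightarrow> real \<Rightarrow> real" where
  "enthalpy gam rho p = 1 + internal_energy gam rho p + p / rho"

text \<open>Conservative variables U = (D, m1, m2, E).\<close>
definition cons :: "real \<Rightarrow> prim \<Rightarrow> real^4" where
  "cons gam w = (case w of (rho, u1, u2, p) \<Rightarrow>
     (let g = lorentz u1 u2; h = enthalpy gam rho p in
      vector [rho * g, rho * h * g\<^sup>2 * u1, rho * h * g\<^sup>2 * u2, rho * h * g\<^sup>2 - p]))"

definition flux :: "real \<Rightarrow> nat \<Rightarrow> prim \<Rightarrow> real^4" where
  "flux gam l w = (case w of (rho, u1, u2, p) \<Rightarrow>
     (let U = cons gam w; ul = (if l = 1 then u1 else u2) in
      vector [U$1 * ul,
              U$2 * ul + (if l = 1 then p else 0),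
              U$3 * ul + (if l = 1 then 0 else p),
              (U$4 + p) * ul]))"

definition adm_set :: "(real^4) set" where
  "adm_set = {U. U$1 > 0 \<and> U$4 - sqrt ((U$1)\<^sup>2 + (U$2)\<^sup>2 + (U$3)\<^sup>2) > 0}"

definition sound_speed :: "real \<Rightarrow> prim \<Rightarrow> real" where
  "sound_speed gam w = (case w of (rho, u1, u2, p) \<Rightarrow>
     sqrt (gam * p / (rho * enthalpy gam rho p)))"

text \<open>Smallest (lam_min = lambda^(1)) and largest (lam_max = lambda^(4)) eigenvalue of dF_l/dU.\<close>
definition lam_min :: "real \<Rightarrow> nat \<Rightarrow> prim \<Rightarrow> real" where
  "lam_min gam l w = (case w of (rho, u1, u2, p) \<Rightarrow>
     (let cs = sound_speed gam w; ul = (if l = 1 then u1 else u2);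
          q = u1\<^sup>2 + u2\<^sup>2; g = lorentz u1 u2 in
      (ul * (1 - cs\<^sup>2) - cs / g * sqrt (1 - ul\<^sup>2 - cs\<^sup>2 * (q - ul\<^sup>2))) / (1 - cs\<^sup>2 * q)))"

definition lam_max :: "real \<Rightarrow> nat \<Rightarrow> prim \<Rightarrow> real" where
  "lam_max gam l w = (case w of (rho, u1, u2, p) \<Rightarrow>
     (let cs = sound_speed gam w; ul = (if l = 1 then u1 else u2);
          q = u1\<^sup>2 + u2\<^sup>2; g = lorentz u1 u2 in
      (ul * (1 - cs\<^sup>2) + cs / g * sqrt (1 - ul\<^sup>2 - cs\<^sup>2 * (q - ul\<^sup>2))) / (1 - cs\<^sup>2 * q)))"

end

theory Submission
  imports Defs
begin

(* The admissible set G is the open forward Lorentz cone E > |(D, m)|, so it is closed under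
   addition (triangle inequality) and positive scaling. The HLL state U* is a positive combination
   of eight one-state wave vectors s U - F_l(U) with s >= lambda_l^(4)(U), or F_l(U) - s U with
   s <= lambda_l^(1)(U), each taken at half of an HLL speed. For such a vector with normal velocity
   u_l, Lorentz factor g and H = rho h, the Minkowski quantity E^2 - D^2 - |m|^2 equals
   g^2 (s - u_l)^2 (H^2 - 2 H p - rho^2) - p^2 (1 - s^2). It is positive because the two extreme
   eigenvalues are exactly the roots of (s - u_l)^2 (1 - c_s^2) - c_s^2 (1 - |u|^2) (1 - s^2),
   so this polynomial is nonnegative at s, and because c_s^2 (H^2 - 2 H p - rho^2) > p^2 (1 - c_s^2)
   holds for the ideal gas with Gamma <= 2. *)

lemma vector_4_nth [simp]:
  "(vector [x1, x2, x3, x4] :: 'a::zero^4) $ 1 = x1"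
  "(vector [x1, x2, x3, x4] :: 'a^4) $ 2 = x2"
  "(vector [x1, x2, x3, x4] :: 'a^4) $ 3 = x3"
  "(vector [x1, x2, x3, x4] :: 'a^4) $ 4 = x4"
  unfolding vector_def by simp_all

subsection \<open>The admissible set is a convex cone\<close>

lemma adm_set_iff:
  "U \<in> adm_set \<longleftrightarrow> 0 < U$1 \<and> 0 < U$4 \<and> (U$1)\<^sup>2 + (U$2)\<^sup>2 + (U$3)\<^sup>2 < (U$4)\<^sup>2"
proof -
  have "sqrt x < y \<longleftrightarrow> 0 < y \<and> x < y\<^sup>2" if "0 \<le> x" for x y :: real
    using that real_less_lsqrt[of y x] le_less_trans[OF real_sqrt_ge_zero[OF that], of y]
      real_sqrt_pow2[OF that] power_strict_mono[of "sqrt x" y 2] by auto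
  then show ?thesis
    unfolding adm_set_def by auto
qed

lemma adm_set_scaleR:
  assumes "U \<in> adm_set" "0 < k"
  shows "k *\<^sub>R U \<in> adm_set"
proof -
  have "k\<^sup>2 * ((U$1)\<^sup>2 + (U$2)\<^sup>2 + (U$3)\<^sup>2) < k\<^sup>2 * (U$4)\<^sup>2"
    using assms by (simp add: adm_set_iff)
  then show ?thesis
    using assms by (simp add: adm_set_iff power_mult_distrib distrib_left)
qed

lemma adm_set_add:
  assumes "U \<in> adm_set" "V \<in> adm_set"
  shows "U + V \<in> adm_set"
proof -
  have "sqrt ((U$1 + V$1)\<^sup>2 + (U$2 + V$2)\<^sup>2 + (U$3 + V$3)\<^sup>2)
      \<le> sqrt ((U$1)\<^sup>2 + (U$2)\<^sup>2 + (U$3)\<^sup>2) + sqrt ((V$1)\<^sup>2 + (V$2)\<^sup>2 + (V$3)\<^sup>2)"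
    using norm_triangle_ineq[of "((U$1, U$2), U$3)" "((V$1, V$2), V$3)"] by (simp add: norm_Pair)
  then show ?thesis
    using assms unfolding adm_set_def by auto
qed

lemma enthalpy_bounds:
  fixes gam rho p :: real
  assumes "0 < rho" "0 < p" "1 < gam" "gam \<le> 2"
  defines "H \<equiv> rho * enthalpy gam rho p"
  shows "rho + 2 * p \<le> H" and "gam * p < H"
    and "p\<^sup>2 * (1 - gam * p / H) < gam * p / H * (H\<^sup>2 - 2 * H * p - rho\<^sup>2)"
proof -
  define k where "k = gam - 1"
  have k: "0 < k" "k \<le> 1"
    using assms(3,4) by (simp_all add: k_def)
  have gam: "gam = 1 + k"
    by (simp add: k_def)
  have H: "H = rho + p / k + p"
    using assms(1) k unfolding H_def enthalpy_def internal_energy_def k_def by (simp add: field_simps)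
  have "k * p \<le> p" "p \<le> p / k"
    using k assms(2) by (simp_all add: field_simps mult_left_le_one_le)
  then show "rho + 2 * p \<le> H" and "gam * p < H"
    using H gam assms(1) by (simp_all add: algebra_simps)
  have "gam * p * (H\<^sup>2 - 2 * H * p - rho\<^sup>2) - p\<^sup>2 * (H - gam * p)
      = p\<^sup>2 * (rho * (2 + k) / k + p * (1 - k\<^sup>2) / k\<^sup>2)"
    using k unfolding H gam by (simp add: field_simps power2_eq_square)
  moreover have "0 < p\<^sup>2 * (rho * (2 + k) / k + p * (1 - k\<^sup>2) / k\<^sup>2)"
    using k assms(1,2) by (intro mult_pos_pos add_pos_nonneg) (simp_all add: power_le_one)
  ultimately have "p\<^sup>2 * (H - gam * p) < gam * p * (H\<^sup>2 - 2 * H * p - rho\<^sup>2)"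
    by linarith
  moreover have "0 < H"
    using \<open>rho + 2 * p \<le> H\<close> assms(1,2) by linarith
  ultimately have "p\<^sup>2 * (H - gam * p) / H < gam * p * (H\<^sup>2 - 2 * H * p - rho\<^sup>2) / H"
    by (rule divide_strict_right_mono)
  moreover have "p\<^sup>2 * (1 - gam * p / H) = p\<^sup>2 * (H - gam * p) / H"
    using \<open>0 < H\<close> by (simp add: field_simps)
  ultimately show "p\<^sup>2 * (1 - gam * p / H) < gam * p / H * (H\<^sup>2 - 2 * H * p - rho\<^sup>2)"
    by simp
qed

lemma sound_speed_bounds:
  fixes gam rho u1 u2 p :: real
  assumes "0 < rho" "0 < p" "1 < gam" "gam \<le> 2"
  shows "0 < sound_speed gam (rho, u1, u2, p)" "sound_speed gam (rho, u1, u2, p) < 1"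
    and "(sound_speed gam (rho, u1, u2, p))\<^sup>2 = gam * p / (rho * enthalpy gam rho p)"
proof -
  have "0 < rho * enthalpy gam rho p" "gam * p < rho * enthalpy gam rho p"
    using enthalpy_bounds(1,2)[OF assms] assms(1,2) by linarith+
  then show "0 < sound_speed gam (rho, u1, u2, p)" "sound_speed gam (rho, u1, u2, p) < 1"
    and "(sound_speed gam (rho, u1, u2, p))\<^sup>2 = gam * p / (rho * enthalpy gam rho p)"
    using assms(2,3) by (simp_all add: sound_speed_def)
qed

subsection \<open>The extreme characteristic speeds\<close>

(* With a = u_l and q = |u|^2 the two roots are lam_max and lam_min, as c / lorentz = c sqrt (1 - q). *)
lemma characteristic_polynomial_factor:
  fixes a q c s :: real
  assumes "a\<^sup>2 \<le> q" "q < 1" "c\<^sup>2 \<le> 1"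
  defines "K \<equiv> 1 - c\<^sup>2 * q"
    and "Z \<equiv> c * sqrt (1 - q) * sqrt (1 - a\<^sup>2 - c\<^sup>2 * (q - a\<^sup>2))"
  shows "0 < K" and "0 \<le> c \<Longrightarrow> 0 \<le> Z"
    and "(s - a)\<^sup>2 * (1 - c\<^sup>2) - c\<^sup>2 * (1 - q) * (1 - s\<^sup>2)
       = K * (s - (a * (1 - c\<^sup>2) + Z) / K) * (s - (a * (1 - c\<^sup>2) - Z) / K)"
proof -
  have "c\<^sup>2 * q \<le> 1 * q"
    using assms(1,3) by (intro mult_right_mono) (simp_all add: order_trans[OF zero_le_power2])
  then show K: "0 < K"
    using assms(2) by (simp add: K_def)
  have "1 - a\<^sup>2 - c\<^sup>2 * (q - a\<^sup>2) = (1 - a\<^sup>2) * (1 - c\<^sup>2) + c\<^sup>2 * (1 - q)"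
    by (simp add: algebra_simps)
  also have "0 \<le> \<dots>"
    using assms by (intro add_nonneg_nonneg mult_nonneg_nonneg) simp_all
  finally have W: "0 \<le> 1 - a\<^sup>2 - c\<^sup>2 * (q - a\<^sup>2)" .
  then show "0 \<le> c \<Longrightarrow> 0 \<le> Z"
    using assms(2) by (simp add: Z_def)
  have Z2: "Z\<^sup>2 = c\<^sup>2 * (1 - q) * (1 - a\<^sup>2 - c\<^sup>2 * (q - a\<^sup>2))"
    using assms(2) W by (simp add: Z_def power_mult_distrib)
  have "K * (s - (a * (1 - c\<^sup>2) + Z) / K) * (s - (a * (1 - c\<^sup>2) - Z) / K)
      = ((K * s - a * (1 - c\<^sup>2))\<^sup>2 - Z\<^sup>2) / K"
    using K by (simp add: field_simps power2_eq_square)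
  also have "(K * s - a * (1 - c\<^sup>2))\<^sup>2 - Z\<^sup>2
      = K * ((s - a)\<^sup>2 * (1 - c\<^sup>2) - c\<^sup>2 * (1 - q) * (1 - s\<^sup>2))"
    unfolding Z2 K_def by algebra
  finally show "(s - a)\<^sup>2 * (1 - c\<^sup>2) - c\<^sup>2 * (1 - q) * (1 - s\<^sup>2)
       = K * (s - (a * (1 - c\<^sup>2) + Z) / K) * (s - (a * (1 - c\<^sup>2) - Z) / K)"
    using K by simp
qed

lemma characteristic_speeds:
  fixes gam rho u1 u2 p s :: real and l :: nat
  assumes "prim_admissible (rho, u1, u2, p)" "1 < gam" "gam \<le> 2"
  defines "c2 \<equiv> (sound_speed gam (rho, u1, u2, p))\<^sup>2" and "ul \<equiv> if l = 1 then u1 else u2"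
  defines "P \<equiv> \<lambda>x. (x - ul)\<^sup>2 * (1 - c2) - c2 * (1 - (u1\<^sup>2 + u2\<^sup>2)) * (1 - x\<^sup>2)"
  shows "lam_min gam l (rho, u1, u2, p) < ul" and "ul < lam_max gam l (rho, u1, u2, p)"
    and "s \<le> lam_min gam l (rho, u1, u2, p) \<or> lam_max gam l (rho, u1, u2, p) \<le> s \<Longrightarrow> 0 \<le> P s"
proof -
  have rho: "0 < rho" and p: "0 < p" and q: "u1\<^sup>2 + u2\<^sup>2 < 1"
    using assms(1) by (simp_all add: prim_admissible_def)
  define c where "c = sound_speed gam (rho, u1, u2, p)"
  define q where "q = u1\<^sup>2 + u2\<^sup>2"
  define K where "K = 1 - c\<^sup>2 * q"
  define Z where "Z = c * sqrt (1 - q) * sqrt (1 - ul\<^sup>2 - c\<^sup>2 * (q - ul\<^sup>2))"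
  define lmax where "lmax = lam_max gam l (rho, u1, u2, p)"
  define lmin where "lmin = lam_min gam l (rho, u1, u2, p)"
  have c: "0 < c" "c < 1"
    using sound_speed_bounds[OF rho p assms(2,3)] by (simp_all add: c_def)
  then have c_sq: "c\<^sup>2 \<le> 1"
    by (simp add: power_le_one)
  have ul: "ul\<^sup>2 \<le> q" "q < 1"
    using q by (simp_all add: q_def ul_def)
  have roots: "lmax = (ul * (1 - c\<^sup>2) + Z) / K" "lmin = (ul * (1 - c\<^sup>2) - Z) / K"
    using q by (simp_all add: lmax_def lmin_def lam_max_def lam_min_def lorentz_def Let_def
        c_def q_def ul_def Z_def K_def)
  note char_poly = characteristic_polynomial_factor[OF ul c_sq, folded K_def Z_def]
  have factor: "P x = K * (x - lmax) * (x - lmin)" for x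
    unfolding roots P_def c2_def c_def[symmetric] q_def[symmetric] using char_poly(3) .
  have K: "0 < K"
    using char_poly(1) .
  have "lmin \<le> lmax"
    using char_poly(2) c K unfolding roots by (simp add: divide_right_mono)
  have "P ul < 0"
    using c ul by (simp add: P_def c2_def c_def[symmetric] q_def[symmetric])
  then have "(ul - lmax) * (ul - lmin) < 0"
    using K unfolding factor by (simp add: mult.assoc mult_less_0_iff)
  with \<open>lmin \<le> lmax\<close> show "lam_min gam l (rho, u1, u2, p) < ul" "ul < lam_max gam l (rho, u1, u2, p)"
    unfolding lmin_def[symmetric] lmax_def[symmetric] by (auto simp: mult_less_0_iff)
  show "0 \<le> P s" if "s \<le> lam_min gam l (rho, u1, u2, p) \<or> lam_max gam l (rho, u1, u2, p) \<le> s"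
    using that \<open>lmin \<le> lmax\<close> K unfolding factor lmin_def[symmetric] lmax_def[symmetric]
    by (auto simp: mult.assoc zero_le_mult_iff)
qed

subsection \<open>Wave vectors of a single state\<close>

lemma sound_cone_inequality:
  fixes g a b s c2 p B :: real
  assumes g: "g\<^sup>2 * (1 - (a\<^sup>2 + b\<^sup>2)) = 1"
    and c2: "c2 < 1" "p\<^sup>2 * (1 - c2) < c2 * B" and B: "0 < B"
    and s: "s \<noteq> a" "c2 * (1 - (a\<^sup>2 + b\<^sup>2)) * (1 - s\<^sup>2) \<le> (s - a)\<^sup>2 * (1 - c2)"
  shows "p\<^sup>2 * (1 - s\<^sup>2) < g\<^sup>2 * (s - a)\<^sup>2 * B"
proof (cases "s\<^sup>2 < 1")
  case True
  have "c2 * (1 - s\<^sup>2) = (g\<^sup>2 * (1 - (a\<^sup>2 + b\<^sup>2))) * (c2 * (1 - s\<^sup>2))"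
    by (simp add: g)
  also have "\<dots> = g\<^sup>2 * (c2 * (1 - (a\<^sup>2 + b\<^sup>2)) * (1 - s\<^sup>2))"
    by (simp add: ac_simps)
  also have "\<dots> \<le> g\<^sup>2 * ((s - a)\<^sup>2 * (1 - c2))"
    using s(2) by (simp add: mult_left_mono)
  finally have "c2 * B * (1 - s\<^sup>2) \<le> g\<^sup>2 * (s - a)\<^sup>2 * B * (1 - c2)"
    using B mult_right_mono[of _ _ B] by (simp add: ac_simps)
  moreover have "p\<^sup>2 * (1 - c2) * (1 - s\<^sup>2) < c2 * B * (1 - s\<^sup>2)"
    using c2(2) True by simp
  ultimately have "p\<^sup>2 * (1 - s\<^sup>2) * (1 - c2) < g\<^sup>2 * (s - a)\<^sup>2 * B * (1 - c2)"
    by (simp add: ac_simps)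
  then show ?thesis
    using c2(1) by simp
next
  case False
  then have "p\<^sup>2 * (1 - s\<^sup>2) \<le> 0"
    by (simp add: mult_nonneg_nonpos)
  also have "0 < g\<^sup>2 * (s - a)\<^sup>2 * B"
    using g s(1) B by (cases "g = 0") simp_all
  finally show ?thesis .
qed

lemma pressure_less_lorentz_enthalpy:
  fixes rho p H g a b :: real
  assumes "0 < rho" "0 < p" "rho + 2 * p \<le> H" "g\<^sup>2 * (1 - (a\<^sup>2 + b\<^sup>2)) = 1"
  shows "a < 1" and "p < H * g\<^sup>2 * (1 - a)"
proof -
  have "g \<noteq> 0" "0 < 1 - (a\<^sup>2 + b\<^sup>2)"
    using assms(4) zero_less_mult_iff[of "g\<^sup>2" "1 - (a\<^sup>2 + b\<^sup>2)"] by auto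
  then have "a\<^sup>2 < 1"
    by (smt (verit) zero_le_power2)
  then show a: "a < 1"
    by (simp add: abs_square_less_1 abs_less_iff)
  define M where "M = H * g\<^sup>2"
  have "M * (1 - a\<^sup>2) = H * (g\<^sup>2 * (1 - (a\<^sup>2 + b\<^sup>2)) + g\<^sup>2 * b\<^sup>2)"
    by (simp add: M_def algebra_simps)
  then have "H \<le> M * (1 - a\<^sup>2)"
    using assms by simp
  moreover have "0 < M * (1 - a) * (1 - a)"
    using assms(1-3) a \<open>g \<noteq> 0\<close> by (simp add: M_def)
  moreover have "M * (1 - a) * (1 - a) = 2 * (M * (1 - a)) - M * (1 - a\<^sup>2)"
    by (simp add: power2_eq_square algebra_simps)
  ultimately show "p < H * g\<^sup>2 * (1 - a)"
    using assms(1,3) unfolding M_def by linarith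
qed

lemma lorentz_cone_wave_vector:
  fixes rho p H g a b s c2 :: real and V :: "real^4"
  assumes rho: "0 < rho" and p: "0 < p" and H: "rho + 2 * p \<le> H"
    and g: "0 < g" "g\<^sup>2 * (1 - (a\<^sup>2 + b\<^sup>2)) = 1"
    and c2: "c2 < 1" "p\<^sup>2 * (1 - c2) < c2 * (H\<^sup>2 - 2 * H * p - rho\<^sup>2)"
    and s: "a < s" "c2 * (1 - (a\<^sup>2 + b\<^sup>2)) * (1 - s\<^sup>2) \<le> (s - a)\<^sup>2 * (1 - c2)"
  defines "M \<equiv> H * g\<^sup>2"
  assumes V: "V$1 = rho * g * (s - a)" "V$4 = (M - p) * (s - a) - p * a"
    "(V$2)\<^sup>2 + (V$3)\<^sup>2 = (M * a * (s - a) - p)\<^sup>2 + (M * b * (s - a))\<^sup>2"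
  shows "V \<in> adm_set"
proof -
  define B where "B = H\<^sup>2 - 2 * H * p - rho\<^sup>2"
  have "rho * rho < H * rho" "H * rho \<le> H * (H - 2 * p)"
    using rho p H by simp_all
  then have B: "0 < B"
    unfolding B_def power2_eq_square by (simp add: algebra_simps)
  have "(V$4)\<^sup>2 - ((V$1)\<^sup>2 + (V$2)\<^sup>2 + (V$3)\<^sup>2)
      = (s - a)\<^sup>2 * (H\<^sup>2 * g\<^sup>2 * (g\<^sup>2 * (1 - (a\<^sup>2 + b\<^sup>2))) - 2 * H * g\<^sup>2 * p - rho\<^sup>2 * g\<^sup>2)
        + p\<^sup>2 * (s\<^sup>2 - 1)"
    unfolding add.assoc V M_def by (simp add: power2_eq_square algebra_simps)
  also have "\<dots> = g\<^sup>2 * (s - a)\<^sup>2 * B - p\<^sup>2 * (1 - s\<^sup>2)"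
    unfolding g(2) B_def by (simp add: algebra_simps)
  also have "0 < \<dots>"
    using sound_cone_inequality[OF g(2) c2[folded B_def] B] s by simp
  finally have cone: "(V$1)\<^sup>2 + (V$2)\<^sup>2 + (V$3)\<^sup>2 < (V$4)\<^sup>2"
    by simp
  \<comment> \<open>\<open>X\<close> is the normal momentum component; \<open>X < V$4\<close> and \<open>X\<^sup>2 < (V$4)\<^sup>2\<close> force \<open>0 < V$4\<close>.\<close>
  define X where "X = M * a * (s - a) - p"
  have "X\<^sup>2 < (V$4)\<^sup>2"
    using cone V(3) unfolding X_def by (smt (verit) zero_le_power2)
  note a = pressure_less_lorentz_enthalpy[OF rho p H g(2)]
  have "V$4 - X = (s - a) * (M * (1 - a) - p) + p * (1 - a)"
    unfolding V(2) X_def by (simp add: algebra_simps)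
  also have "0 < \<dots>"
    using s(1) a p unfolding M_def by (intro add_pos_pos mult_pos_pos) simp_all
  finally have "0 < (V$4 - X) * (V$4 + X)" "0 < V$4 - X"
    using \<open>X\<^sup>2 < (V$4)\<^sup>2\<close> by (simp_all add: power2_eq_square algebra_simps)
  then have "0 < V$4"
    by (simp add: zero_less_mult_iff)
  moreover have "0 < V$1"
    using rho g(1) s(1) by (simp add: V(1))
  ultimately show ?thesis
    using cone by (simp add: adm_set_iff)
qed

lemma wave_vector_in_adm_set:
  fixes gam rho u1 u2 p a b s :: real and V :: "real^4"
  assumes adm: "prim_admissible (rho, u1, u2, p)" and gam: "1 < gam" "gam \<le> 2"
    and ab: "a\<^sup>2 + b\<^sup>2 = u1\<^sup>2 + u2\<^sup>2"
  defines "c2 \<equiv> (sound_speed gam (rho, u1, u2, p))\<^sup>2"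
    and "M \<equiv> rho * enthalpy gam rho p * (lorentz u1 u2)\<^sup>2"
  assumes s: "a < s" "c2 * (1 - (u1\<^sup>2 + u2\<^sup>2)) * (1 - s\<^sup>2) \<le> (s - a)\<^sup>2 * (1 - c2)"
    and V: "V$1 = rho * lorentz u1 u2 * (s - a)" "V$4 = (M - p) * (s - a) - p * a"
      "(V$2)\<^sup>2 + (V$3)\<^sup>2 = (M * a * (s - a) - p)\<^sup>2 + (M * b * (s - a))\<^sup>2"
  shows "V \<in> adm_set"
proof (rule lorentz_cone_wave_vector)
  have rho: "0 < rho" and p: "0 < p" and q: "a\<^sup>2 + b\<^sup>2 < 1"
    using adm ab by (simp_all add: prim_admissible_def)
  then show "0 < rho" "0 < p" "rho + 2 * p \<le> rho * enthalpy gam rho p"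
    using enthalpy_bounds(1)[OF rho p gam] by simp_all
  show "0 < lorentz u1 u2" "(lorentz u1 u2)\<^sup>2 * (1 - (a\<^sup>2 + b\<^sup>2)) = 1"
    using q unfolding lorentz_def ab by (simp_all add: power_divide)
  show "c2 < 1"
    using sound_speed_bounds(1,2)[OF rho p gam, of u1 u2] by (simp add: c2_def abs_square_less_1)
  show "p\<^sup>2 * (1 - c2) < c2 * ((rho * enthalpy gam rho p)\<^sup>2 - 2 * (rho * enthalpy gam rho p) * p - rho\<^sup>2)"
    using sound_speed_bounds(3)[OF rho p gam, of u1 u2] enthalpy_bounds(3)[OF rho p gam]
    by (simp add: c2_def)
qed (use s V ab in \<open>simp_all add: M_def mult.assoc\<close>)

lemma scaled_cons_minus_flux_components:
  fixes gam rho u1 u2 p s :: real and l :: nat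
  assumes "l \<in> {1, 2}" and V: "V = s *\<^sub>R cons gam (rho, u1, u2, p) - flux gam l (rho, u1, u2, p)"
  defines "ul \<equiv> if l = 1 then u1 else u2" and "ut \<equiv> if l = 1 then u2 else u1"
    and "M \<equiv> rho * enthalpy gam rho p * (lorentz u1 u2)\<^sup>2"
  shows "V$1 = rho * lorentz u1 u2 * (s - ul)" and "V$4 = (M - p) * (s - ul) - p * ul"
    and "(V$2)\<^sup>2 + (V$3)\<^sup>2 = (M * ul * (s - ul) - p)\<^sup>2 + (M * ut * (s - ul))\<^sup>2"
  using assms(1) by (auto simp: V M_def ul_def ut_def cons_def flux_def Let_def algebra_simps)

lemma scaled_cons_minus_flux_in_adm_set:
  assumes "prim_admissible w" "1 < gam" "gam \<le> 2" "l \<in> {1, 2}" "lam_max gam l w \<le> s"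
  shows "s *\<^sub>R cons gam w - flux gam l w \<in> adm_set"
proof -
  obtain rho u1 u2 p where w: "w = (rho, u1, u2, p)"
    by (cases w)
  define ul where "ul = (if l = 1 then u1 else u2)"
  define ut where "ut = (if l = 1 then u2 else u1)"
  have adm: "prim_admissible (rho, u1, u2, p)"
    using assms(1) w by simp
  note speeds = characteristic_speeds[OF adm assms(2,3), where l = l, folded ul_def]
  define V where "V = s *\<^sub>R cons gam (rho, u1, u2, p) - flux gam l (rho, u1, u2, p)"
  note components = scaled_cons_minus_flux_components[OF assms(4) V_def, folded ul_def ut_def]
  have "V \<in> adm_set"
  proof (rule wave_vector_in_adm_set[OF adm assms(2,3), where a = ul and b = ut])
    show "ul\<^sup>2 + ut\<^sup>2 = u1\<^sup>2 + u2\<^sup>2"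
      by (simp add: ul_def ut_def)
    show "ul < s"
      using speeds(2) assms(5) w by simp
    show "(sound_speed gam (rho, u1, u2, p))\<^sup>2 * (1 - (u1\<^sup>2 + u2\<^sup>2)) * (1 - s\<^sup>2)
        \<le> (s - ul)\<^sup>2 * (1 - (sound_speed gam (rho, u1, u2, p))\<^sup>2)"
      using speeds(3)[of s] assms(5) w by simp
  qed (fact components)+
  then show ?thesis
    by (simp add: w V_def)
qed

lemma flux_minus_scaled_cons_in_adm_set:
  assumes "prim_admissible w" "1 < gam" "gam \<le> 2" "l \<in> {1, 2}" "s \<le> lam_min gam l w"
  shows "flux gam l w - s *\<^sub>R cons gam w \<in> adm_set"
proof -
  obtain rho u1 u2 p where w: "w = (rho, u1, u2, p)"
    by (cases w)
  define ul where "ul = (if l = 1 then u1 else u2)"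
  define ut where "ut = (if l = 1 then u2 else u1)"
  have adm: "prim_admissible (rho, u1, u2, p)"
    using assms(1) w by simp
  note speeds = characteristic_speeds[OF adm assms(2,3), where l = l, folded ul_def]
  define V where "V = s *\<^sub>R cons gam (rho, u1, u2, p) - flux gam l (rho, u1, u2, p)"
  note components = scaled_cons_minus_flux_components[OF assms(4) V_def, folded ul_def ut_def]
  \<comment> \<open>Reflecting \<open>u\<^sub>l\<close> and \<open>s\<close> turns the case of \<open>lam_min\<close> into that of \<open>lam_max\<close>.\<close>
  have "- V \<in> adm_set"
  proof (rule wave_vector_in_adm_set[OF adm assms(2,3), where a = "- ul" and b = ut and s = "- s"])
    show "(- ul)\<^sup>2 + ut\<^sup>2 = u1\<^sup>2 + u2\<^sup>2"
      by (simp add: ul_def ut_def)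
    show "- ul < - s"
      using speeds(1) assms(5) w by simp
    show "(sound_speed gam (rho, u1, u2, p))\<^sup>2 * (1 - (u1\<^sup>2 + u2\<^sup>2)) * (1 - (- s)\<^sup>2)
        \<le> (- s - - ul)\<^sup>2 * (1 - (sound_speed gam (rho, u1, u2, p))\<^sup>2)"
      using speeds(3)[of s] assms(5) w by (simp add: power2_commute)
  qed (simp_all add: components algebra_simps power2_commute)
  then show ?thesis
    by (simp add: w V_def)
qed

lemma hll_state_decomposition:
  fixes U_RU U_LU U_LD U_RD F_RU F_LU F_LD F_RD G_RU G_LU G_LD G_RD :: "real^'n"
    and SR SL SU SD k :: real
  shows "k *\<^sub>R ((SR * SU) *\<^sub>R U_RU + (SL * SD) *\<^sub>R U_LD - (SR * SD) *\<^sub>R U_RD - (SL * SU) *\<^sub>R U_LU)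
     - k *\<^sub>R (SU *\<^sub>R (F_RU - F_LU) - SD *\<^sub>R (F_RD - F_LD))
     - k *\<^sub>R (SR *\<^sub>R (G_RU - G_RD) - SL *\<^sub>R (G_LU - G_LD))
   = k *\<^sub>R (SU *\<^sub>R ((SR / 2) *\<^sub>R U_RU - F_RU) + SR *\<^sub>R ((SU / 2) *\<^sub>R U_RU - G_RU)
       + SU *\<^sub>R (F_LU - (SL / 2) *\<^sub>R U_LU) + (- SL) *\<^sub>R ((SU / 2) *\<^sub>R U_LU - G_LU)
       + (- SD) *\<^sub>R ((SR / 2) *\<^sub>R U_RD - F_RD) + SR *\<^sub>R (G_RD - (SD / 2) *\<^sub>R U_RD)
       + (- SD) *\<^sub>R (F_LD - (SL / 2) *\<^sub>R U_LD) + (- SL) *\<^sub>R (G_LD - (SD / 2) *\<^sub>R U_LD))"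
  by (simp add: vec_eq_iff field_simps)

theorem theorem1:
  fixes gam :: real and wRU wLU wLD wRD :: prim
  assumes "1 < gam" and "gam \<le> 2"
    and "prim_admissible wRU" "prim_admissible wLU"
    and "prim_admissible wLD" "prim_admissible wRD"
  defines "Ws \<equiv> {wLD, wRD, wLU, wRU}"
  defines "SL \<equiv> 2 * Min (lam_min gam 1 ` Ws)"
    and "SR \<equiv> 2 * Max (lam_max gam 1 ` Ws)"
    and "SD \<equiv> 2 * Min (lam_min gam 2 ` Ws)"
    and "SU \<equiv> 2 * Max (lam_max gam 2 ` Ws)"
  assumes "SL < 0" "0 < SR" "SD < 0" "0 < SU"
  defines "Ustar \<equiv>
      (1 / ((SR - SL) * (SU - SD))) *\<^sub>R
        ((SR * SU) *\<^sub>R cons gam wRU + (SL * SD) *\<^sub>R cons gam wLD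
         - (SR * SD) *\<^sub>R cons gam wRD - (SL * SU) *\<^sub>R cons gam wLU)
    - (1 / ((SR - SL) * (SU - SD))) *\<^sub>R
        (SU *\<^sub>R (flux gam 1 wRU - flux gam 1 wLU)
         - SD *\<^sub>R (flux gam 1 wRD - flux gam 1 wLD))
    - (1 / ((SR - SL) * (SU - SD))) *\<^sub>R
        (SR *\<^sub>R (flux gam 2 wRU - flux gam 2 wRD)
         - SL *\<^sub>R (flux gam 2 wLU - flux gam 2 wLD))"
  shows "Ustar \<in> adm_set \<and> Ustar$1 > 0 \<and> Ustar$4 > 0
         \<and> (Ustar$4)\<^sup>2 - (Ustar$1)\<^sup>2 - ((Ustar$2)\<^sup>2 + (Ustar$3)\<^sup>2) > 0"
proof -
  have waves: "(SR / 2) *\<^sub>R cons gam w - flux gam 1 w \<in> adm_set"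
    "(SU / 2) *\<^sub>R cons gam w - flux gam 2 w \<in> adm_set"
    "flux gam 1 w - (SL / 2) *\<^sub>R cons gam w \<in> adm_set"
    "flux gam 2 w - (SD / 2) *\<^sub>R cons gam w \<in> adm_set" if "w \<in> Ws" for w
  proof -
    have "finite Ws" "prim_admissible w"
      using that assms(3-6) by (auto simp: Ws_def)
    with that assms(1,2) show "(SR / 2) *\<^sub>R cons gam w - flux gam 1 w \<in> adm_set"
      "(SU / 2) *\<^sub>R cons gam w - flux gam 2 w \<in> adm_set"
      "flux gam 1 w - (SL / 2) *\<^sub>R cons gam w \<in> adm_set"
      "flux gam 2 w - (SD / 2) *\<^sub>R cons gam w \<in> adm_set"
      unfolding SR_def SU_def SL_def SD_def
      by (auto intro!: scaled_cons_minus_flux_in_adm_set flux_minus_scaled_cons_in_adm_set Max_ge Min_le)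
  qed
  have mem: "wRU \<in> Ws" "wLU \<in> Ws" "wRD \<in> Ws" "wLD \<in> Ws"
    by (simp_all add: Ws_def)
  have pos: "0 < SU" "0 < SR" "0 < - SL" "0 < - SD"
    using \<open>SL < 0\<close> \<open>0 < SR\<close> \<open>SD < 0\<close> \<open>0 < SU\<close> by linarith+
  then have "0 < 1 / ((SR - SL) * (SU - SD))"
    by (simp only: zero_less_divide_1_iff) (intro mult_pos_pos; linarith)
  then have "Ustar \<in> adm_set"
    unfolding Ustar_def hll_state_decomposition
    by (intro adm_set_scaleR adm_set_add waves mem pos)
  then show ?thesis
    by (simp add: adm_set_iff)
qed

end
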